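(* Let $S=S'\wedge C$ be a scheduling problem on $n$ elements where $C$ is a contractible clause, let $V(C)=O_1\uplus\cdots\uplus O_k$ be the decomposition into $\sim_C$ equivalence classes ordered so that $O_i>O_j$ for $i<j$, and let $r_i=|O_i|-1$. Then $$\mathcal{S}_{S'\wedge\neg C}=\left(\mathcal{S}_{S'\downarrow_{(r_1,\dots,r_k)}}\right)\uparrow^{(r_1,\dots,r_k)}.$$
   Context: A scheduling problem on $n$ elements is a Boolean formula over atoms $(x_i\le x_j)$, $i,j\in[n]$, with $(x_i=x_j)=(x_i\le x_j)\wedge(x_j\le x_i)$ and $(x_i\ne x_j)=\neg(x_i=x_j)$. A solution is $f:[n]\to\mathbb{P}=\{1,2,\dots\}$ making it true with $x_i=f(i)$; $\mathcal{S}_S=\sum_f y_{f(1)}\cdots y_{f(n)}$ over solutions, in noncommuting variables $y_1,y_2,\dots$. A formula $C$ given as $C=\bigvee_{(i,j)\in I}(x_i\ne x_j)$ with $I\subseteq[n]\times[n]$ is edge-like; $V(C)$ is the set of indices $i$ with $x_i$ appearing in $C$, and $\sim_C$ is the equivalence relation on $V(C)$ generated by $i\sim j$ for $(i,j)\in I$. For disjoint sets, $A>B$ means $a>b$ for all $a\in A,b\in B$. $C$ is a contractible clause if it is edge-like, $V(C)=\{m,m+1,\dots,n\}$ for some $1\le m\le n$, and the $\sim_C$ classes can be ordered $O_1,\dots,O_k$ with $O_i>O_j$ for $i<j$. With $r=\sum_i r_i$, the contraction $S'\downarrow_{(r_1,\dots,r_k)}$ is the scheduling problem on $n-r$ elements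 obtained from $S'$ by replacing each variable $x_j$ by $x_{\psi(j)}$, where $\psi(j)=j$ for $j<m$ and $\psi(j)=m+k-i$ for $j\in O_i$ (i.e. each class is identified to one variable and indices are standardized to $[n-r]$ preserving order). Induction: for nonnegative integers $r_1,\dots,r_k$ and a monomial $y_{i_1}\cdots y_{i_p}$ with $k\le p$, $y_{i_1}\cdots y_{i_p}\uparrow^{(r_1,\dots,r_k)}=y_{i_1}\cdots y_{i_{p-k}}y_{i_{p-k+1}}^{1+r_k}\cdots y_{i_p}^{1+r_1}$, extended linearly (termwise). *)

theory Defs
  imports Main
begin

text \<open>Boolean formulas over atoms (x_i \<le> x_j); indices are 1-based naturals.\<close>
datatype sform = Tru | Fls | Atom nat nat | Neg sform | Conj sform sform | Disj sform sform

fun holds :: "(nat \<Rightarrow> nat) \<Rightarrow> sform \<Rightarrow> bool" where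
  "holds f Tru = True"
| "holds f Fls = False"
| "holds f (Atom i j) = (f i \<le> f j)"
| "holds f (Neg a) = (\<not> holds f a)"
| "holds f (Conj a b) = (holds f a \<and> holds f b)"
| "holds f (Disj a b) = (holds f a \<or> holds f b)"

fun vars :: "sform \<Rightarrow> nat set" where
  "vars Tru = {}"
| "vars Fls = {}"
| "vars (Atom i j) = {i, j}"
| "vars (Neg a) = vars a"
| "vars (Conj a b) = vars a \<union> vars b"
| "vars (Disj a b) = vars a \<union> vars b"

definition sched_on :: "nat \<Rightarrow> sform \<Rightarrow> bool" where
  "sched_on n S \<longleftrightarrow> vars S \<subseteq> {1..n}"

fun rename :: "(nat \<Rightarrow> nat) \<Rightarrow> sform \<Rightarrow> sform" where
  "rename \<psi> Tru = Tru"
| "rename \<psi> Fls = Fls"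
| "rename \<psi> (Atom i j) = Atom (\<psi> i) (\<psi> j)"
| "rename \<psi> (Neg a) = Neg (rename \<psi> a)"
| "rename \<psi> (Conj a b) = Conj (rename \<psi> a) (rename \<psi> b)"
| "rename \<psi> (Disj a b) = Disj (rename \<psi> a) (rename \<psi> b)"

definition Eq :: "nat \<Rightarrow> nat \<Rightarrow> sform" where
  "Eq i j = Conj (Atom i j) (Atom j i)"

definition Neq :: "nat \<Rightarrow> nat \<Rightarrow> sform" where
  "Neq i j = Neg (Eq i j)"

text \<open>A noncommutative series in y_1, y_2, ... is represented by its coefficient
  function on words: the word [a_1,...,a_p] stands for the monomial y_(a_1)...y_(a_p).
  The solution f : [n] \<rightarrow> P corresponds to the word [f 1, ..., f n].\<close>
type_synonym ncseries = "nat list \<Rightarrow> nat"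

definition gf :: "nat \<Rightarrow> sform \<Rightarrow> ncseries" where
  "gf n S w = (if length w = n \<and> (\<forall>a\<in>set w. 0 < a) \<and> holds (\<lambda>i. w ! (i - 1)) S
               then 1 else 0)"

definition edge_clause :: "(nat \<times> nat) list \<Rightarrow> sform" where
  "edge_clause I = foldr (\<lambda>(i, j) acc. Disj (Neq i j) acc) I Fls"

definition Vc :: "(nat \<times> nat) list \<Rightarrow> nat set" where
  "Vc I = fst ` set I \<union> snd ` set I"

definition simC :: "(nat \<times> nat) list \<Rightarrow> (nat \<times> nat) set" where
  "simC I = (set I \<union> (set I)\<inverse>)\<^sup>* \<inter> (Vc I \<times> Vc I)"

definition ordered_classes :: "(nat \<times> nat) list \<Rightarrow> nat \<Rightarrow> (nat \<Rightarrow> nat set) \<Rightarrow> bool" where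
  "ordered_classes I k Cls \<longleftrightarrow>
     Cls ` {1..k} = Vc I // simC I \<and>
     (\<forall>i j. 1 \<le> i \<longrightarrow> i < j \<longrightarrow> j \<le> k \<longrightarrow> (\<forall>a\<in>Cls i. \<forall>b\<in>Cls j. b < a))"

definition contractible :: "(nat \<times> nat) list \<Rightarrow> nat \<Rightarrow> bool" where
  "contractible I n \<longleftrightarrow>
     (\<exists>m. 1 \<le> m \<and> m \<le> n \<and> Vc I = {m..n}) \<and> (\<exists>k Cls. ordered_classes I k Cls)"

definition contract_map :: "nat \<Rightarrow> nat \<Rightarrow> (nat \<Rightarrow> nat set) \<Rightarrow> nat \<Rightarrow> nat" where
  "contract_map m k Cls j = (if j < m then j else m + k - (THE i. i \<in> {1..k} \<and> j \<in> Cls i))"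

definition contraction :: "nat \<Rightarrow> nat \<Rightarrow> (nat \<Rightarrow> nat set) \<Rightarrow> sform \<Rightarrow> sform" where
  "contraction m k Cls S = rename (contract_map m k Cls) S"

text \<open>y_(i_1)...y_(i_p) \<up> (r_1..r_k) =
  y_(i_1)...y_(i_(p-k)) y_(i_(p-k+1))^(1+r_k) ... y_(i_p)^(1+r_1).\<close>
definition ind_word :: "nat \<Rightarrow> (nat \<Rightarrow> nat) \<Rightarrow> nat list \<Rightarrow> nat list" where
  "ind_word k r w =
     take (length w - k) w @
     concat (map (\<lambda>j. replicate (1 + r (k - j)) (w ! (length w - k + j))) [0..<k])"

definition induce :: "nat \<Rightarrow> (nat \<Rightarrow> nat) \<Rightarrow> ncseries \<Rightarrow> ncseries" where
  "induce k r G u = (\<Sum>w \<in> {w. k \<le> length w \<and> ind_word k r w = u}. G w)"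

end

theory Submission
  imports Defs
begin

text \<open>Since the classes satisfy O_1 > ... > O_k and partition the interval [m, n], they are
  consecutive blocks of it, O_k being the lowest one. Pulling a word w of length m + k - 1 back
  along the contraction map (u_i = w_{\<psi>(i)}) therefore repeats its last k letters |O_k|, ..., |O_1|
  times, which is exactly the induced monomial. A word u of length n satisfies the negated clause iff
  it is constant on the classes, i.e. iff it is such a pullback, and then w is unique and satisfies the
  contracted problem iff u satisfies S'. So every solution of S' \<and> \<not>C is induced by exactly one
  solution of the contracted problem, and every other induced monomial vanishes.\<close>

lemma holds_rename: "holds f (rename \<psi> S) = holds (f \<circ> \<psi>) S"
  by (induction S) auto

lemma holds_cong: "(\<And>i. i \<in> vars S \<Longrightarrow> f i = g i) \<Longrightarrow> holds f S = holds g S"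
  by (induction S) auto

lemma holds_edge_clause: "holds f (edge_clause I) \<longleftrightarrow> (\<exists>(a, b) \<in> set I. f a \<noteq> f b)"
  by (induction I) (auto simp: edge_clause_def Neq_def Eq_def)

lemma equiv_simC: "equiv (Vc I) (simC I)"
proof (rule equivI)
  show "refl_on (Vc I) (simC I)" unfolding refl_on_def simC_def by auto
  show "sym (simC I)" unfolding simC_def sym_def
    by (auto simp: sym_rtrancl[OF sym_Un_converse, unfolded sym_def])
  show "trans (simC I)" unfolding simC_def trans_def
    by (auto intro: rtrancl_trans)
qed (auto simp: simC_def)

lemma rtrancl_edges_eq:
  assumes "(x, y) \<in> (set I \<union> (set I)\<inverse>)\<^sup>*" and "\<forall>(a, b) \<in> set I. f a = f b"
  shows "f x = f y"
  using assms(1) by induction (use assms(2) in auto)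

lemma upt_concat_blocks:
  "concat (map (\<lambda>j. [a + (\<Sum>t<j. c t)..<a + (\<Sum>t<Suc j. c t)]) [0..<k]) = [a..<a + (\<Sum>t<k. c t)]"
proof (induction k)
  case (Suc k)
  then show ?case
    using upt_add_eq_append[of a "a + (\<Sum>t<k. c t)" "c k"] by (simp add: add.assoc)
qed simp

lemma down_closed_eq_atLeastLessThan:
  fixes D :: "nat set"
  assumes "finite D" and "D \<subseteq> {m..}" and down: "\<And>x y. x \<in> D \<Longrightarrow> m \<le> y \<Longrightarrow> y \<le> x \<Longrightarrow> y \<in> D"
  shows "D = {m..<m + card D}"
proof (cases "D = {}")
  case False
  have "D = {m..Max D}"
  proof
    show "D \<subseteq> {m..Max D}" using assms(1,2) by auto
    show "{m..Max D} \<subseteq> D" using down[OF Max_in[OF assms(1) False]] by auto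
  qed
  moreover have "m \<le> Max D"
    using assms(1,2) False Max_in by blast
  ultimately have "card D = Suc (Max D) - m" and "D = {m..<Suc (Max D)}"
    by (metis card_atLeastAtMost, simp add: atLeastLessThanSuc_atLeastAtMost)
  then show ?thesis
    using \<open>m \<le> Max D\<close> by simp
qed simp

lemma nth_map_upt_1: "q \<in> {1..N} \<Longrightarrow> map f [1..<Suc N] ! (q - 1) = f q"
  by (auto simp del: upt_Suc)

lemma set_conv_nth_1: "set w = (\<lambda>p. w ! (p - 1)) ` {1..length w}"
proof (intro equalityI subsetI)
  fix x assume "x \<in> set w"
  then obtain i where "i < length w" "x = w ! i" by (auto simp: in_set_conv_nth)
  then show "x \<in> (\<lambda>p. w ! (p - 1)) ` {1..length w}" by (intro image_eqI[of _ _ "Suc i"]) auto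
qed auto

lemma length_ind_word:
  "k \<le> length w \<Longrightarrow> length (ind_word k r w) = length w + (\<Sum>j<k. r (k - j))"
  by (simp add: ind_word_def length_concat sum_list_distinct_conv_sum_set atLeast0LessThan
      sum_Suc)

lemma set_ind_word: "k \<le> length w \<Longrightarrow> set (ind_word k r w) = set w"
proof -
  assume k: "k \<le> length w"
  have "set (drop (length w - k) w) = (\<lambda>j. w ! (length w - k + j)) ` {..<k}"
    using k by (auto simp: in_set_conv_nth image_iff)
  then have "set (concat (map (\<lambda>j. replicate (1 + r (k - j)) (w ! (length w - k + j))) [0..<k])) =
      set (drop (length w - k) w)"
    by auto
  then show ?thesis
    unfolding ind_word_def by (metis append_take_drop_id set_append)
qed

lemma finite_ind_word_fiber: "finite {w. k \<le> length w \<and> ind_word k r w = u}"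
proof (rule finite_subset)
  show "{w. k \<le> length w \<and> ind_word k r w = u} \<subseteq> {w. set w \<subseteq> set u \<and> length w \<le> length u}"
    by (auto simp: set_ind_word length_ind_word)
qed (simp add: finite_lists_length_le)

locale contractible_clause =
  fixes n m k :: nat and I :: "(nat \<times> nat) list" and Cls :: "nat \<Rightarrow> nat set"
  assumes Vc_eq: "Vc I = {m..n}" and m_pos: "1 \<le> m" and m_le_n: "m \<le> n"
    and ordered: "ordered_classes I k Cls"
begin

abbreviation \<psi> :: "nat \<Rightarrow> nat" where "\<psi> \<equiv> contract_map m k Cls"

lemma class_in_quotient: "i \<in> {1..k} \<Longrightarrow> Cls i \<in> Vc I // simC I"
  using ordered unfolding ordered_classes_def by auto

lemma class_less: "i < j \<Longrightarrow> 1 \<le> i \<Longrightarrow> j \<le> k \<Longrightarrow> a \<in> Cls i \<Longrightarrow> b \<in> Cls j \<Longrightarrow> b < a"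
  using ordered unfolding ordered_classes_def by auto

lemma class_nonempty: "i \<in> {1..k} \<Longrightarrow> Cls i \<noteq> {}"
  using class_in_quotient equiv_simC in_quotient_imp_non_empty by blast

lemma class_subset: "i \<in> {1..k} \<Longrightarrow> Cls i \<subseteq> {m..n}"
  using class_in_quotient equiv_simC in_quotient_imp_subset Vc_eq by blast

lemma finite_class: "i \<in> {1..k} \<Longrightarrow> finite (Cls i)"
  using class_subset finite_subset by blast

lemma card_class_pos: "i \<in> {1..k} \<Longrightarrow> 0 < card (Cls i)"
  using class_nonempty finite_class card_gt_0_iff by blast

lemma Union_classes: "\<Union>(Cls ` {1..k}) = {m..n}"
  using ordered Union_quotient[OF equiv_simC] Vc_eq unfolding ordered_classes_def by metis

lemma class_unique: "i \<in> {1..k} \<Longrightarrow> j \<in> {1..k} \<Longrightarrow> x \<in> Cls i \<Longrightarrow> x \<in> Cls j \<Longrightarrow> i = j"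
  using class_less[of i j x x] class_less[of j i x x] by (cases i j rule: linorder_cases) auto

lemma contract_map_class: "i \<in> {1..k} \<Longrightarrow> x \<in> Cls i \<Longrightarrow> \<psi> x = m + k - i"
proof -
  assume i: "i \<in> {1..k}" and x: "x \<in> Cls i"
  then have "(THE i. i \<in> {1..k} \<and> x \<in> Cls i) = i"
    using class_unique by blast
  moreover have "m \<le> x" using class_subset[OF i] x by auto
  ultimately show ?thesis unfolding contract_map_def by simp
qed

lemma contract_map_below: "x < m \<Longrightarrow> \<psi> x = x"
  unfolding contract_map_def by simp

lemma mem_classE:
  assumes "x \<in> {m..n}"
  obtains i where "i \<in> {1..k}" "x \<in> Cls i" "\<psi> x = m + k - i"
  using assms Union_classes contract_map_class by blast

lemma k_pos: "1 \<le> k"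
  using mem_classE[of m] m_le_n by fastforce

lemma same_class_rtrancl:
  assumes "i \<in> {1..k}" "x \<in> Cls i" "y \<in> Cls i"
  shows "(x, y) \<in> (set I \<union> (set I)\<inverse>)\<^sup>*"
  using quotient_eq_iff[OF equiv_simC class_in_quotient[OF assms(1)] class_in_quotient[OF assms(1)]]
    assms unfolding simC_def by blast

lemma edge_same_class:
  assumes "(a, b) \<in> set I"
  obtains i where "i \<in> {1..k}" "a \<in> Cls i" "b \<in> Cls i"
proof -
  have ab: "a \<in> {m..n}" "b \<in> {m..n}" "(a, b) \<in> simC I"
    using assms Vc_eq unfolding Vc_def simC_def by force+
  obtain i j where i: "i \<in> {1..k}" "a \<in> Cls i" and j: "j \<in> {1..k}" "b \<in> Cls j"
    using mem_classE ab(1,2) by metis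
  have "Cls i = Cls j"
    using quotient_eq_iff[OF equiv_simC class_in_quotient[OF i(1)] class_in_quotient[OF j(1)]] i j ab(3)
    by blast
  then show ?thesis using that i j by auto
qed

text \<open>Blocks are counted from the bottom of [m, n]: block j is the class O_(k-j), matching the
  order in which ind_word repeats the last k letters.\<close>

definition block_start :: "nat \<Rightarrow> nat" where
  "block_start j = m + (\<Sum>t<j. card (Cls (k - t)))"

lemma lower_classes_eq:
  assumes "j \<le> k"
  shows "(\<Union>t<j. Cls (k - t)) = {m..<block_start j}"
proof -
  let ?U = "\<Union>t<j. Cls (k - t)"
  have cls: "t < j \<Longrightarrow> k - t \<in> {1..k}" for t using assms by auto
  have "card ?U = (\<Sum>t<j. card (Cls (k - t)))"
  proof (rule card_UN_disjoint)
    show "\<forall>t\<in>{..<j}. finite (Cls (k - t))" using cls finite_class by blast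
    show "\<forall>t\<in>{..<j}. \<forall>t'\<in>{..<j}. t \<noteq> t' \<longrightarrow> Cls (k - t) \<inter> Cls (k - t') = {}"
    proof (intro ballI impI)
      fix t t' assume "t \<in> {..<j}" "t' \<in> {..<j}" "t \<noteq> t'"
      then have "k - t \<noteq> k - t'" "k - t \<in> {1..k}" "k - t' \<in> {1..k}" using assms by auto
      then show "Cls (k - t) \<inter> Cls (k - t') = {}" using class_unique by blast
    qed
  qed simp
  moreover have "?U = {m..<m + card ?U}"
  proof (rule down_closed_eq_atLeastLessThan)
    show "finite ?U" using cls finite_class by blast
    show "?U \<subseteq> {m..}" using cls class_subset by force
    fix x y assume "x \<in> ?U" "m \<le> y" "y \<le> x"
    then obtain t where t: "t < j" "x \<in> Cls (k - t)" by blast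
    then have "x \<le> n" using cls class_subset by force
    then have "y \<in> {m..n}" using \<open>m \<le> y\<close> \<open>y \<le> x\<close> by simp
    then obtain i where i: "i \<in> {1..k}" "y \<in> Cls i" using mem_classE by metis
    have "\<not> i < k - t" using class_less[of i "k - t" y x] i t \<open>y \<le> x\<close> by auto
    then show "y \<in> ?U" using i t by (intro UN_I[of "k - i"]) auto
  qed
  ultimately show ?thesis unfolding block_start_def by simp
qed

lemma class_eq_block:
  assumes "j < k"
  shows "Cls (k - j) = {block_start j..<block_start (Suc j)}"
proof -
  have "Cls (k - j) \<inter> Cls (k - t) = {}" if "t < j" for t
    using class_unique[of "k - j" "k - t"] that assms by fastforce
  then have "Cls (k - j) \<inter> (\<Union>t<j. Cls (k - t)) = {}" by blast
  moreover have "(\<Union>t<Suc j. Cls (k - t)) = Cls (k - j) \<union> (\<Union>t<j. Cls (k - t))"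
    by (simp add: lessThan_Suc)
  ultimately have "Cls (k - j) = {m..<block_start (Suc j)} - {m..<block_start j}"
    using lower_classes_eq[of j] lower_classes_eq[of "Suc j"] assms by auto
  moreover have "m \<le> block_start j" unfolding block_start_def by simp
  ultimately show ?thesis by auto
qed

lemma sum_card_classes: "(\<Sum>i=1..k. card (Cls i)) = Suc n - m"
proof -
  have "(\<Sum>i=1..k. card (Cls i)) = card (\<Union>(Cls ` {1..k}))"
    using finite_class class_unique by (intro card_UN_disjoint[symmetric]) auto
  then show ?thesis using Union_classes by simp
qed

lemma block_start_k: "block_start k = Suc n"
proof -
  have "(\<Sum>t<k. card (Cls (k - t))) = (\<Sum>i=1..k. card (Cls i))"
    by (rule sum.reindex_bij_witness[of _ "\<lambda>i. k - i" "\<lambda>t. k - t"]) auto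
  then show ?thesis using sum_card_classes m_le_n unfolding block_start_def by simp
qed

lemma contracted_size: "n - (\<Sum>i=1..k. card (Cls i) - 1) = m + k - 1"
proof -
  have "(\<Sum>i=1..k. card (Cls i) - 1) = (\<Sum>i=1..k. card (Cls i)) - (\<Sum>i=1..k. 1)"
    using card_class_pos by (intro sum_subtractf_nat) (simp add: Suc_le_eq)
  moreover have "k \<le> (\<Sum>i=1..k. card (Cls i))"
    using sum_mono[of "{1..k}" "\<lambda>_. 1" "\<lambda>i. card (Cls i)"] card_class_pos by (simp add: Suc_le_eq)
  ultimately show ?thesis using sum_card_classes m_le_n by simp
qed

lemma contract_map_image: "\<psi> ` {1..n} = {1..m + k - 1}"
proof
  show "\<psi> ` {1..n} \<subseteq> {1..m + k - 1}"
  proof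
    fix y assume "y \<in> \<psi> ` {1..n}"
    then obtain x where x: "x \<in> {1..n}" and y: "y = \<psi> x" by blast
    show "y \<in> {1..m + k - 1}"
    proof (cases "x < m")
      case True
      then show ?thesis using x y contract_map_below k_pos by simp
    next
      case False
      then obtain i where "i \<in> {1..k}" "y = m + k - i" using x y mem_classE[of x] by auto
      then show ?thesis using m_pos by auto
    qed
  qed
  show "{1..m + k - 1} \<subseteq> \<psi> ` {1..n}"
  proof
    fix p assume p: "p \<in> {1..m + k - 1}"
    show "p \<in> \<psi> ` {1..n}"
    proof (cases "p < m")
      case True
      then show ?thesis using p m_le_n contract_map_below by (intro image_eqI[of _ _ p]) auto
    next
      case False
      then have i: "m + k - p \<in> {1..k}" using p by auto
      then obtain x where x: "x \<in> Cls (m + k - p)" using class_nonempty by blast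
      then have "x \<in> {1..n}" using class_subset[OF i] m_pos by auto
      moreover have "\<psi> x = p" using contract_map_class[OF i x] False p by auto
      ultimately show ?thesis by blast
    qed
  qed
qed

lemma contract_map_less_iff: "x \<in> {1..n} \<Longrightarrow> \<psi> x < m \<longleftrightarrow> x < m"
proof (cases "x < m")
  case False
  moreover assume "x \<in> {1..n}"
  ultimately obtain i where "i \<in> {1..k}" "\<psi> x = m + k - i" using mem_classE[of x] by auto
  then show ?thesis using False by auto
qed (simp add: contract_map_below)

lemma contract_map_eq_rtrancl:
  assumes "x \<in> {1..n}" "y \<in> {1..n}" "\<psi> x = \<psi> y"
  shows "(x, y) \<in> (set I \<union> (set I)\<inverse>)\<^sup>*"
proof (cases "x < m")
  case True
  then have "y < m" using assms contract_map_less_iff by metis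
  then have "x = y" using True assms(3) contract_map_below by simp
  then show ?thesis by simp
next
  case False
  then have "y \<ge> m" using assms contract_map_less_iff by (metis not_less)
  obtain i j where "i \<in> {1..k}" "x \<in> Cls i" "\<psi> x = m + k - i"
    and "j \<in> {1..k}" "y \<in> Cls j" "\<psi> y = m + k - j"
    using assms False \<open>y \<ge> m\<close> mem_classE[of x] mem_classE[of y] by (metis atLeastAtMost_iff not_less)
  moreover from this have "i = j" using assms(3) by auto
  ultimately show ?thesis using same_class_rtrancl[of i x y] by simp
qed

definition pullback :: "nat list \<Rightarrow> nat list" where
  "pullback w = map (\<lambda>i. w ! (\<psi> i - 1)) [1..<Suc n]"

lemma length_pullback [simp]: "length (pullback w) = n"
  unfolding pullback_def by (simp del: upt_Suc)

lemma nth_pullback: "i \<in> {1..n} \<Longrightarrow> pullback w ! (i - 1) = w ! (\<psi> i - 1)"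
  unfolding pullback_def by (rule nth_map_upt_1)

lemma set_pullback:
  assumes "length w = m + k - 1"
  shows "set (pullback w) = set w"
proof -
  have "set (pullback w) = (\<lambda>i. pullback w ! (i - 1)) ` {1..n}"
    using set_conv_nth_1[of "pullback w"] by simp
  also have "\<dots> = (\<lambda>p. w ! (p - 1)) ` \<psi> ` {1..n}"
    unfolding image_image using nth_pullback by (rule image_cong[OF refl])
  finally show ?thesis using contract_map_image assms set_conv_nth_1[of w] by simp
qed

lemma pullback_inj:
  assumes "length w = m + k - 1" "length w' = m + k - 1" "pullback w = pullback w'"
  shows "w = w'"
proof (rule nth_equalityI)
  show "length w = length w'" using assms(1,2) by (rule trans[OF _ sym])
  fix p assume "p < length w"
  then have "Suc p \<in> {1..m + k - 1}" using assms(1) by simp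
  then have "Suc p \<in> \<psi> ` {1..n}" by (simp only: contract_map_image)
  then obtain i where i: "i \<in> {1..n}" and \<psi>i: "\<psi> i = Suc p" by (rule imageE) simp
  have "w ! p = pullback w ! (i - 1)" using nth_pullback[OF i] \<psi>i by simp
  also have "\<dots> = w' ! p" using nth_pullback[OF i] \<psi>i assms(3) by simp
  finally show "w ! p = w' ! p" .
qed

lemma pullback_surj:
  assumes "length u = n" and "\<forall>(a, b) \<in> set I. u ! (a - 1) = u ! (b - 1)"
  obtains w where "length w = m + k - 1" "pullback w = u"
proof
  let ?rep = "inv_into {1..n} \<psi>"
  define w where "w = map (\<lambda>p. u ! (?rep p - 1)) [1..<Suc (m + k - 1)]"
  show "length w = m + k - 1" unfolding w_def by (simp del: upt_Suc)
  show "pullback w = u"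
  proof (rule nth_equalityI)
    fix p assume "p < length (pullback w)"
    then have i: "Suc p \<in> {1..n}" by simp
    then have "\<psi> (Suc p) \<in> {1..m + k - 1}" unfolding contract_map_image[symmetric] by (rule imageI)
    then have "pullback w ! p = u ! (?rep (\<psi> (Suc p)) - 1)"
      unfolding w_def using nth_pullback[OF i] nth_map_upt_1 by (simp del: upt_Suc)
    also have "\<dots> = u ! p"
    proof -
      have "?rep (\<psi> (Suc p)) \<in> {1..n}" "\<psi> (?rep (\<psi> (Suc p))) = \<psi> (Suc p)"
        using i by (blast intro: inv_into_into, blast intro: f_inv_into_f)
      then show ?thesis
        using rtrancl_edges_eq[OF contract_map_eq_rtrancl[OF _ i] assms(2)] by simp
    qed
    finally show "pullback w ! p = u ! p" .
  qed (simp add: assms(1))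
qed

lemma map_block:
  assumes "j < k"
  shows "map (\<lambda>i. w ! (\<psi> i - 1)) [block_start j..<block_start (Suc j)] =
    replicate (card (Cls (k - j))) (w ! (m - 1 + j))"
proof (rule replicate_eqI)
  show "length (map (\<lambda>i. w ! (\<psi> i - 1)) [block_start j..<block_start (Suc j)]) = card (Cls (k - j))"
    using class_eq_block[OF assms] by simp
  have cls: "k - j \<in> {1..k}" using assms by auto
  fix y assume "y \<in> set (map (\<lambda>i. w ! (\<psi> i - 1)) [block_start j..<block_start (Suc j)])"
  then obtain x where "x \<in> Cls (k - j)" "y = w ! (\<psi> x - 1)"
    using class_eq_block[OF assms] by auto
  then show "y = w ! (m - 1 + j)" using contract_map_class[OF cls] assms m_pos by simp
qed

lemma ind_word_pullback:
  assumes "length w = m + k - 1"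
  shows "ind_word k (\<lambda>i. card (Cls i) - 1) w = pullback w"
proof -
  let ?g = "\<lambda>i. w ! (\<psi> i - 1)"
  have "[1..<Suc n] = [1..<m] @ concat (map (\<lambda>j. [block_start j..<block_start (Suc j)]) [0..<k])"
    using upt_add_eq_append[of 1 m "Suc n - m"] m_pos m_le_n block_start_k
      upt_concat_blocks[of m "\<lambda>t. card (Cls (k - t))" k]
    unfolding block_start_def by simp
  then have "pullback w =
      map ?g [1..<m] @ concat (map (\<lambda>j. map ?g [block_start j..<block_start (Suc j)]) [0..<k])"
    unfolding pullback_def by (simp only: map_append map_concat map_map comp_def)
  also have "map ?g [1..<m] = take (length w - k) w"
    using assms contract_map_below by (intro nth_equalityI) (auto simp: nth_upt)
  also have "map (\<lambda>j. map ?g [block_start j..<block_start (Suc j)]) [0..<k] =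
      map (\<lambda>j. replicate (1 + (card (Cls (k - j)) - 1)) (w ! (length w - k + j))) [0..<k]"
    using map_block card_class_pos assms m_pos by (intro map_cong) auto
  finally show ?thesis unfolding ind_word_def by simp
qed

lemma gf_pullback:
  assumes "sched_on n S'" and "length w = m + k - 1"
  shows "gf n (Conj S' (Neg (edge_clause I))) (pullback w) = gf (m + k - 1) (contraction m k Cls S') w"
proof -
  have "holds (\<lambda>i. pullback w ! (i - 1)) S' = holds (\<lambda>i. w ! (i - 1)) (contraction m k Cls S')"
    unfolding contraction_def holds_rename
    using assms(1) nth_pullback unfolding sched_on_def by (intro holds_cong) auto
  moreover have "pullback w ! (a - 1) = pullback w ! (b - 1)" if ab: "(a, b) \<in> set I" for a b
  proof -
    obtain c where c: "c \<in> {1..k}" "a \<in> Cls c" "b \<in> Cls c" using edge_same_class[OF ab] by blast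
    then have "a \<in> {1..n}" "b \<in> {1..n}" using class_subset m_pos by fastforce+
    then show ?thesis using c nth_pullback contract_map_class by simp
  qed
  ultimately show ?thesis
    unfolding gf_def using set_pullback[OF assms(2)] assms(2) by (auto simp: holds_edge_clause)
qed

lemma gf_eq_induce:
  assumes "sched_on n S'"
  shows "gf n (Conj S' (Neg (edge_clause I))) u =
    induce k (\<lambda>i. card (Cls i) - 1) (gf (m + k - 1) (contraction m k Cls S')) u"
proof -
  let ?r = "\<lambda>i. card (Cls i) - 1" and ?G = "gf (m + k - 1) (contraction m k Cls S')"
  define W where "W = {w. length w = m + k - 1 \<and> pullback w = u}"
  have "induce k ?r ?G u = (\<Sum>w\<in>W. ?G w)"
    unfolding induce_def
  proof (rule sum.mono_neutral_right)
    show "finite {w. k \<le> length w \<and> ind_word k ?r w = u}" by (rule finite_ind_word_fiber)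
    show "W \<subseteq> {w. k \<le> length w \<and> ind_word k ?r w = u}"
      unfolding W_def using ind_word_pullback m_pos by auto
    show "\<forall>w \<in> {w. k \<le> length w \<and> ind_word k ?r w = u} - W. ?G w = 0"
      unfolding W_def using ind_word_pullback by (auto simp: gf_def)
  qed
  also have "\<dots> = gf n (Conj S' (Neg (edge_clause I))) u"
  proof (cases "W = {}")
    case True
    have "gf n (Conj S' (Neg (edge_clause I))) u = 0"
    proof (rule ccontr)
      assume "gf n (Conj S' (Neg (edge_clause I))) u \<noteq> 0"
      then have "length u = n" "\<forall>(a, b) \<in> set I. u ! (a - 1) = u ! (b - 1)"
        by (auto simp: gf_def holds_edge_clause split: if_splits)
      then obtain w where "w \<in> W" using pullback_surj unfolding W_def by blast
      with True show False by simp
    qed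
    then show ?thesis using True by simp
  next
    case False
    then obtain w where w: "length w = m + k - 1" "pullback w = u" unfolding W_def by blast
    then have "W = {w}" unfolding W_def using pullback_inj by blast
    then show ?thesis using gf_pullback[OF assms w(1)] w(2) by simp
  qed
  finally show ?thesis by simp
qed

end

theorem lemma3p7:
  fixes n m k :: nat and S' :: sform and I :: "(nat \<times> nat) list"
    and Cls :: "nat \<Rightarrow> nat set"
  assumes "sched_on n S'"
    and "contractible I n"
    and "Vc I = {m..n}"
    and "ordered_classes I k Cls"
  shows "gf n (Conj S' (Neg (edge_clause I))) =
         induce k (\<lambda>i. card (Cls i) - 1)
           (gf (n - (\<Sum>i=1..k. card (Cls i) - 1)) (contraction m k Cls S'))"
proof -
  obtain m' where m': "1 \<le> m'" "m' \<le> n" "Vc I = {m'..n}"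
    using assms(2) unfolding contractible_def by blast
  then have "m = m'" using assms(3) by (metis atLeastAtMost_iff order_refl antisym)
  then interpret contractible_clause n m k I Cls
    using m' assms(3,4) by unfold_locales auto
  show ?thesis
    using gf_eq_induce[OF assms(1)] contracted_size by (intro ext) simp
qed

end
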